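(* Let $\mathcal I=\mathcal I_\ell$ be an intersection pattern such that whenever $(\mathcal S_1,\ldots,\mathcal S_\ell)\in\mathcal I$ one has $|\mathcal S_j|=k_j\ge2$ for every $1\le j\le\ell$. For each $j$, let $\xi_{k_j,r}$ be a functional satisfying the assumptions in the context. Let $\mathbf X$ be a tuple of $|\mathcal I|$ i.i.d. points in $\mathbb R^d$ with density $q$, where $q$ is bounded and continuous almost everywhere, and let $(\mathcal T_1,\ldots,\mathcal T_\ell)=\Pi_{\mathcal I}(\mathbf X)$. Then there is a constant $c\ge0$ such that \[ \lim_{r\to0}r^{-d(|\mathcal I|-\#_{\mathcal I})}\,\mathbb E\Big[\prod_{j=1}^\ell\xi_{k_j,r}(\mathcal T_j)\Big]=c. \]
   Context: Each $\xi_{k,r}$ ($r>0$) maps finite subsets of $\mathbb R^d$ to $[0,\infty)$, vanishes unless the set has exactly $k$ points, and satisfies: $\xi_{k,r}(\alpha\mathcal S+x)=\xi_{k,r/\alpha}(\mathcal S)$ for all $\alpha>0,x\in\mathbb R^d,r>0$; there is $r_{\max}>0$ with $\xi_{k,1}(\mathcal S)=0$ if $\operatorname{diam}\mathcal S>r_{\max}$; $\sup_{\mathcal S}|\xi_{k,1}(\mathcal S)|<\infty$; and there is a nonempty open $\mathcal N\subset(\mathbb R^d)^{k-1}$ with $\xi_{k,1}(0,\mathbf y)>0$ on $\mathcal N$. An intersection pattern $\mathcal I=\mathcal I_\ell$ is a family of natural numbers $(I_J)$ indexed by nonempty $J\subset[\ell]$; finite sets $\mathcal S_1,\ldots,\mathcal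 S_\ell$ obey it if $|(\bigcap_{j\in J}\mathcal S_j)\cap(\bigcap_{j\notin J}\mathcal S_j^c)|=I_J$ for all such $J$; $|\mathcal I|=\sum_J I_J$. $\Pi_{\mathcal I}(\mathbf x)$ splits a tuple $\mathbf x$ of $|\mathcal I|$ points into sets $(\mathcal T_1,\ldots,\mathcal T_\ell)$ obeying $\mathcal I$, in a fixed manner. $\#_{\mathcal I}$ is the number of connected components of the intersection graph of $\mathcal I$: the graph on $\{1,\ldots,\ell\}$ with an edge $\{i,j\}$ iff $|\mathcal T_i\cap\mathcal T_j|>0$. *)

theory Defs
  imports "HOL-Probability.Probability"
begin

text \<open>Index set [l] is rendered as {..<l} (0-based).
  The nonempty index subsets J of [l]: \<close>
definition nonempty_subsets :: "nat \<Rightarrow> nat set set" where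
  "nonempty_subsets l = {J. J \<subseteq> {..<l} \<and> J \<noteq> {}}"

definition pattern_size :: "nat \<Rightarrow> (nat set \<Rightarrow> nat) \<Rightarrow> nat" where
  "pattern_size l I = (\<Sum>J\<in>nonempty_subsets l. I J)"

text \<open>Intersection graph of I on {..<l}: i, j adjacent iff some J containing both
  has I_J > 0 (equivalently the split sets T_i, T_j intersect).\<close>
definition isect_edges :: "nat \<Rightarrow> (nat set \<Rightarrow> nat) \<Rightarrow> (nat \<times> nat) set" where
  "isect_edges l I = {(i, j). i < l \<and> j < l \<and>
      (\<exists>J\<in>nonempty_subsets l. i \<in> J \<and> j \<in> J \<and> 0 < I J)}"

definition num_components :: "nat \<Rightarrow> (nat set \<Rightarrow> nat) \<Rightarrow> nat" where
  "num_components l I = card ({..<l} // (isect_edges l I)\<^sup>*)"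

text \<open>The splitting map Pi_I in a fixed manner: a labelling lab assigns to each
  index i < |I| the block J = lab i it belongs to; a labelling is admissible for I
  when each block J receives exactly I_J indices.\<close>
definition admissible_labelling :: "nat \<Rightarrow> (nat set \<Rightarrow> nat) \<Rightarrow> (nat \<Rightarrow> nat set) \<Rightarrow> bool" where
  "admissible_labelling l I lab \<longleftrightarrow>
     (\<forall>i < pattern_size l I. lab i \<in> nonempty_subsets l) \<and>
     (\<forall>J\<in>nonempty_subsets l. card {i. i < pattern_size l I \<and> lab i = J} = I J)"

definition split_set :: "nat \<Rightarrow> (nat set \<Rightarrow> nat) \<Rightarrow> (nat \<Rightarrow> nat set) \<Rightarrow> nat \<Rightarrow> (nat \<Rightarrow> 'a) \<Rightarrow> 'a set" where
  "split_set l I lab j x = x ` {i. i < pattern_size l I \<and> j \<in> lab i}"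

definition admissible_functional :: "nat \<Rightarrow> (real \<Rightarrow> 'a::euclidean_space set \<Rightarrow> real) \<Rightarrow> bool" where
  "admissible_functional k \<xi> \<longleftrightarrow>
     (\<forall>r>0. \<forall>S. finite S \<longrightarrow> 0 \<le> \<xi> r S) \<and>
     (\<forall>r>0. \<forall>S. finite S \<longrightarrow> card S \<noteq> k \<longrightarrow> \<xi> r S = 0) \<and>
     (\<forall>\<alpha>>0. \<forall>x. \<forall>r>0. \<forall>S. finite S \<longrightarrow> \<xi> r ((\<lambda>y. \<alpha> *\<^sub>R y + x) ` S) = \<xi> (r / \<alpha>) S) \<and>
     (\<exists>rmax>0. \<forall>S. finite S \<longrightarrow> diameter S > rmax \<longrightarrow> \<xi> 1 S = 0) \<and>
     (\<exists>B. \<forall>S. finite S \<longrightarrow> \<bar>\<xi> 1 S\<bar> \<le> B) \<and>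
     (\<exists>N. openin (product_topology (\<lambda>_. euclidean) {..<k - 1}) N \<and> N \<noteq> {} \<and>
          (\<forall>y\<in>N. \<xi> 1 (insert 0 (y ` {..<k - 1})) > 0))"

end

theory Submission
  imports Defs
begin

(* Call two sample indices linked when their blocks share a set index. Since every T_j is
   nonempty, the classes of the generated equivalence correspond to the components of the
   intersection graph, so anchoring each class at its least index leaves |I| - #I non-anchors.
   Substituting x_i = x_(anchor i) + r y_i for the non-anchors turns every T_j into the image
   of an r-independent configuration under y |-> r y + c; by scale invariance the integrand no
   longer depends on r, and the Jacobian is exactly r^(d (|I| - #I)). What remains is the
   integral of shape(x) * prod_i q(x_(anchor i) + r y_i), where shape is bounded and, since the
   functionals vanish on configurations of large diameter, supported where the y_i are bounded.
   Dominated convergence and the a.e. continuity of q give the limit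
   c = integral of shape(x) * prod_i q(x_(anchor i)), which is nonnegative. *)

section \<open>Affine substitutions in finite powers of Lebesgue measure\<close>

lemma product_sigma_finite_lborel:
  "product_sigma_finite (\<lambda>_::'i. lborel :: 'a::euclidean_space measure)"
  unfolding product_sigma_finite_def by (auto intro: sigma_finite_lborel)

lemma measurable_PiM_lborel_selfI:
  fixes \<Phi> :: "('i \<Rightarrow> 'a::euclidean_space) \<Rightarrow> 'i \<Rightarrow> 'a"
  assumes "\<And>i. i \<in> A \<Longrightarrow> (\<lambda>x. \<Phi> x i) \<in> borel_measurable (PiM A (\<lambda>_. lborel))"
    and "\<And>x i. x \<in> extensional A \<Longrightarrow> i \<notin> A \<Longrightarrow> \<Phi> x i = undefined"
  shows "\<Phi> \<in> PiM A (\<lambda>_. lborel) \<rightarrow>\<^sub>M PiM A (\<lambda>_. lborel)"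
proof -
  have "(\<lambda>x i. \<Phi> x i) \<in> PiM A (\<lambda>_. lborel) \<rightarrow>\<^sub>M PiM A (\<lambda>_. lborel)"
    using assms by (intro measurable_PiM_single') (auto simp: space_PiM PiE_def extensional_def)
  then show ?thesis by simp
qed

lemma PiM_density_eq_density_PiM:
  fixes f :: "'a \<Rightarrow> ennreal"
  assumes fin: "finite A" and M: "sigma_finite_measure M"
    and Mf: "sigma_finite_measure (density M f)" and f[measurable]: "f \<in> borel_measurable M"
  shows "PiM A (\<lambda>_::'i. density M f) = density (PiM A (\<lambda>_. M)) (\<lambda>x. \<Prod>i\<in>A. f (x i))"
proof -
  interpret Mf: product_sigma_finite "\<lambda>_::'i. density M f"
    unfolding product_sigma_finite_def using Mf by auto
  interpret M: product_sigma_finite "\<lambda>_::'i. M"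
    unfolding product_sigma_finite_def using M by auto
  have sets_eq: "sets (PiM A (\<lambda>_::'i. density M f)) = sets (PiM A (\<lambda>_. M))"
    by (intro sets_PiM_cong) auto
  show ?thesis
  proof (rule Mf.PiM_eqI[OF fin, symmetric])
    fix B assume "\<And>i. i \<in> A \<Longrightarrow> B i \<in> sets (density M f)"
    then have B[measurable]: "\<And>i. i \<in> A \<Longrightarrow> B i \<in> sets M" by simp
    have "emeasure (density (PiM A (\<lambda>_. M)) (\<lambda>x. \<Prod>i\<in>A. f (x i))) (PiE A B)
        = (\<integral>\<^sup>+ x. (\<Prod>i\<in>A. f (x i)) * indicator (PiE A B) x \<partial>PiM A (\<lambda>_. M))"
      using fin B by (intro emeasure_density sets_PiM_I_finite) auto
    also have "\<dots> = (\<integral>\<^sup>+ x. (\<Prod>i\<in>A. f (x i) * indicator (B i) (x i)) \<partial>PiM A (\<lambda>_. M))"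
    proof (intro nn_integral_cong)
      fix x assume "x \<in> space (PiM A (\<lambda>_. M))"
      then have "indicator (PiE A B) x = (\<Prod>i\<in>A. indicator (B i) (x i) :: ennreal)"
        using fin by (cases "x \<in> PiE A B")
          (auto simp: indicator_def space_PiM PiE_def intro!: prod.neutral)
      then show "(\<Prod>i\<in>A. f (x i)) * indicator (PiE A B) x = (\<Prod>i\<in>A. f (x i) * indicator (B i) (x i))"
        by (simp add: prod.distrib)
    qed
    also have "\<dots> = (\<Prod>i\<in>A. \<integral>\<^sup>+ z. f z * indicator (B i) z \<partial>M)"
      using B by (intro M.product_nn_integral_prod[OF fin]) auto
    also have "\<dots> = (\<Prod>i\<in>A. emeasure (density M f) (B i))"
      using B by (intro prod.cong refl) (simp add: emeasure_density)
    finally show "emeasure (density (PiM A (\<lambda>_. M)) (\<lambda>x. \<Prod>i\<in>A. f (x i))) (PiE A B)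
        = (\<Prod>i\<in>A. emeasure (density M f) (B i))" .
  qed (simp add: sets_eq)
qed

lemma AE_PiM_finite_component:
  assumes M: "sigma_finite_measure M" and fin: "finite A" and i: "i \<in> A"
    and ae: "AE z in M. P z"
  shows "AE x in PiM A (\<lambda>_::'i. M). P (x i)"
proof -
  interpret M: product_sigma_finite "\<lambda>_::'i. M"
    unfolding product_sigma_finite_def using M by auto
  obtain Z where Z: "{z \<in> space M. \<not> P z} \<subseteq> Z" "Z \<in> sets M" "emeasure M Z = 0"
    using AE_E[OF ae] by blast
  define B where "B j = (if j = i then Z else space M)" for j
  have B: "B j \<in> sets M" for j
    using Z(2) by (simp add: B_def)
  have "emeasure (PiM A (\<lambda>_. M)) (PiE A B) = (\<Prod>j\<in>A. emeasure M (B j))"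
    using B by (intro M.emeasure_PiM fin)
  also have "\<dots> = 0"
    by (subst prod.remove[OF fin i]) (simp add: B_def Z(3))
  finally have "emeasure (PiM A (\<lambda>_. M)) (PiE A B) = 0" .
  moreover have "PiE A B \<in> sets (PiM A (\<lambda>_. M))"
    using B by (intro sets_PiM_I_finite fin)
  ultimately have "PiE A B \<in> null_sets (PiM A (\<lambda>_. M))"
    by (auto intro: null_setsI)
  moreover have "{x \<in> space (PiM A (\<lambda>_. M)). \<not> P (x i)} \<subseteq> PiE A B"
  proof
    fix x assume x: "x \<in> {x \<in> space (PiM A (\<lambda>_. M)). \<not> P (x i)}"
    then have "x i \<in> Z" using Z(1) i by (auto simp: space_PiM)
    then show "x \<in> PiE A B" using x by (auto simp: space_PiM B_def)
  qed
  ultimately show ?thesis by (rule AE_I')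
qed

lemma nn_integral_PiM_lborel_shear:
  fixes g :: "('i \<Rightarrow> 'a::euclidean_space) \<Rightarrow> ennreal"
  assumes fin: "finite A" and a: "a \<notin> A" and b: "b \<in> A" and r: "r > 0"
    and g[measurable]: "g \<in> borel_measurable (PiM (insert a A) (\<lambda>_. lborel))"
  shows "(\<integral>\<^sup>+ x. g x \<partial>PiM (insert a A) (\<lambda>_. lborel)) =
    ennreal (r ^ DIM('a)) * (\<integral>\<^sup>+ x. g (x(a := x b + r *\<^sub>R x a)) \<partial>PiM (insert a A) (\<lambda>_. lborel))"
proof -
  interpret product_sigma_finite "\<lambda>_::'i. lborel :: 'a measure"
    by (rule product_sigma_finite_lborel)
  let ?shear = "\<lambda>x. x(a := x b + r *\<^sub>R x a)"
  have ba: "b \<noteq> a" using a b by auto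
  have "?shear \<in> PiM (insert a A) (\<lambda>_. lborel) \<rightarrow>\<^sub>M PiM (insert a A) (\<lambda>_. lborel)"
    using a b by (intro measurable_PiM_lborel_selfI) (auto simp: extensional_def)
  then have g_shear: "(\<lambda>x. g (?shear x)) \<in> borel_measurable (PiM (insert a A) (\<lambda>_. lborel))"
    by (rule measurable_compose) (rule g)
  have affine: "(\<integral>\<^sup>+ y. g (x(a := y)) \<partial>lborel)
      = (\<integral>\<^sup>+ y. ennreal (r ^ DIM('a)) * g (x(a := x b + r *\<^sub>R y)) \<partial>lborel)"
    if x: "x \<in> space (PiM A (\<lambda>_. lborel))" for x
  proof -
    have gx: "(\<lambda>y. g (x(a := y))) \<in> borel_measurable borel"
      using measurable_comp[OF measurable_component_update g, OF x a] unfolding comp_def by simp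
    have "(\<integral>\<^sup>+ y. g (x(a := y)) \<partial>lborel)
        = (\<integral>\<^sup>+ y. g (x(a := y))
            \<partial>density (distr lborel borel (\<lambda>y. x b + r *\<^sub>R y)) (\<lambda>_. \<bar>r\<bar> ^ DIM('a)))"
      using lborel_affine[of r "x b"] r by simp
    also have "\<dots> = (\<integral>\<^sup>+ y. ennreal (\<bar>r\<bar> ^ DIM('a)) * g (x(a := y))
        \<partial>distr lborel borel (\<lambda>y. x b + r *\<^sub>R y))"
      using gx by (subst nn_integral_density) auto
    also have "\<dots> = (\<integral>\<^sup>+ y. ennreal (r ^ DIM('a)) * g (x(a := x b + r *\<^sub>R y)) \<partial>lborel)"
      using gx r by (subst nn_integral_distr) auto
    finally show ?thesis .
  qed
  have "(\<integral>\<^sup>+ x. g x \<partial>PiM (insert a A) (\<lambda>_. lborel))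
      = (\<integral>\<^sup>+ x. (\<integral>\<^sup>+ y. g (x(a := y)) \<partial>lborel) \<partial>PiM A (\<lambda>_. lborel))"
    by (rule product_nn_integral_insert[OF fin a g])
  also have "\<dots> = (\<integral>\<^sup>+ x. (\<integral>\<^sup>+ y. ennreal (r ^ DIM('a)) * g (x(a := x b + r *\<^sub>R y)) \<partial>lborel)
      \<partial>PiM A (\<lambda>_. lborel))"
    using affine by (rule nn_integral_cong)
  also have "\<dots> = (\<integral>\<^sup>+ x. ennreal (r ^ DIM('a)) * g (?shear x) \<partial>PiM (insert a A) (\<lambda>_. lborel))"
    using ba g_shear by (subst product_nn_integral_insert[OF fin a]) auto
  also have "\<dots> = ennreal (r ^ DIM('a)) * (\<integral>\<^sup>+ x. g (?shear x) \<partial>PiM (insert a A) (\<lambda>_. lborel))"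
    using g_shear by (rule nn_integral_cmult)
  finally show ?thesis .
qed

definition anchored_rescale :: "'i set \<Rightarrow> ('i \<Rightarrow> 'i) \<Rightarrow> real \<Rightarrow> ('i \<Rightarrow> 'a::real_vector) \<Rightarrow> 'i \<Rightarrow> 'a" where
  "anchored_rescale N \<rho> r x = (\<lambda>i. if i \<in> N then x (\<rho> i) + r *\<^sub>R x i else x i)"

lemma measurable_anchored_rescale:
  assumes "N \<subseteq> A" and "\<And>i. i \<in> N \<Longrightarrow> \<rho> i \<in> A"
  shows "anchored_rescale N \<rho> r
    \<in> PiM A (\<lambda>_. lborel) \<rightarrow>\<^sub>M PiM A (\<lambda>_. lborel :: 'a::euclidean_space measure)"
proof (rule measurable_PiM_lborel_selfI)
  fix i assume i: "i \<in> A"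
  show "(\<lambda>x. anchored_rescale N \<rho> r x i) \<in> borel_measurable (PiM A (\<lambda>_. lborel))"
  proof (cases "i \<in> N")
    case True
    then have [measurable]: "\<rho> i \<in> A" using assms by auto
    show ?thesis using True i unfolding anchored_rescale_def by simp
  qed (use i in \<open>simp add: anchored_rescale_def\<close>)
qed (use assms in \<open>auto simp: anchored_rescale_def extensional_def\<close>)

lemma nn_integral_PiM_lborel_anchored_rescale:
  fixes g :: "('i \<Rightarrow> 'a::euclidean_space) \<Rightarrow> ennreal"
  assumes fin: "finite A" and N: "N \<subseteq> A" and \<rho>: "\<And>i. i \<in> N \<Longrightarrow> \<rho> i \<in> A - N" and r: "r > 0"
    and g: "g \<in> borel_measurable (PiM A (\<lambda>_. lborel))"
  shows "(\<integral>\<^sup>+ x. g x \<partial>PiM A (\<lambda>_. lborel)) =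
    ennreal (r ^ (DIM('a) * card N)) * (\<integral>\<^sup>+ x. g (anchored_rescale N \<rho> r x) \<partial>PiM A (\<lambda>_. lborel))"
  using finite_subset[OF N fin] N \<rho>
proof (induction N rule: finite_induct)
  case empty
  have "anchored_rescale {} \<rho> r x = x" for x :: "'i \<Rightarrow> 'a"
    by (auto simp: anchored_rescale_def)
  then show ?case by simp
next
  case (insert a N)
  let ?\<Phi> = "anchored_rescale N \<rho> r"
  have \<rho>N: "\<And>i. i \<in> N \<Longrightarrow> \<rho> i \<in> A - N" and a: "a \<in> A" and \<rho>a: "\<rho> a \<in> A - {a}"
    using insert.prems by auto
  have "?\<Phi> \<in> PiM A (\<lambda>_. lborel) \<rightarrow>\<^sub>M PiM A (\<lambda>_. lborel)"
    using insert.prems \<rho>N by (intro measurable_anchored_rescale) auto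
  then have g\<Phi>: "(\<lambda>x. g (?\<Phi> x)) \<in> borel_measurable (PiM A (\<lambda>_. lborel))"
    by (rule measurable_compose) (rule g)
  have A: "insert a (A - {a}) = A" using a by auto
  have shear: "(\<integral>\<^sup>+ x. g (?\<Phi> x) \<partial>PiM A (\<lambda>_. lborel)) =
      ennreal (r ^ DIM('a)) * (\<integral>\<^sup>+ x. g (?\<Phi> (x(a := x (\<rho> a) + r *\<^sub>R x a))) \<partial>PiM A (\<lambda>_. lborel))"
    using nn_integral_PiM_lborel_shear[of "A - {a}" a "\<rho> a" r "\<lambda>x. g (?\<Phi> x)"] fin \<rho>a r g\<Phi>
    unfolding A by auto
  \<comment> \<open>the anchor \<open>\<rho> a\<close> is not in \<open>N\<close>, so the new shear commutes with the earlier ones\<close>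
  have compose: "?\<Phi> (x(a := x (\<rho> a) + r *\<^sub>R x a)) = anchored_rescale (insert a N) \<rho> r x" for x
    using insert.prems insert.hyps unfolding anchored_rescale_def by (auto intro!: ext)
  have IH: "(\<integral>\<^sup>+ x. g x \<partial>PiM A (\<lambda>_. lborel)) =
      ennreal (r ^ (DIM('a) * card N)) * (\<integral>\<^sup>+ x. g (?\<Phi> x) \<partial>PiM A (\<lambda>_. lborel))"
    using insert.IH[OF _ \<rho>N] insert.prems by auto
  have "r ^ (DIM('a) * card (insert a N)) = r ^ (DIM('a) * card N) * r ^ DIM('a)"
    using insert.hyps by (simp add: power_add)
  then have pow: "ennreal (r ^ (DIM('a) * card (insert a N)))
      = ennreal (r ^ (DIM('a) * card N)) * ennreal (r ^ DIM('a))"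
    using r by (simp add: ennreal_mult)
  show ?case
    unfolding IH shear compose pow by (simp add: mult.assoc)
qed

section \<open>Anchors of an intersection pattern\<close>

lemma finite_nonempty_subsets: "finite (nonempty_subsets l)"
  unfolding nonempty_subsets_def by (rule finite_subset[of _ "Pow {..<l}"]) auto

locale labelled_pattern =
  fixes l :: nat and I :: "nat set \<Rightarrow> nat" and lab :: "nat \<Rightarrow> nat set"
  assumes admissible: "admissible_labelling l I lab"
begin

abbreviation n :: nat where "n \<equiv> pattern_size l I"

abbreviation E :: "nat rel" where "E \<equiv> isect_edges l I"

definition indices :: "nat \<Rightarrow> nat set" where
  "indices j = {i. i < n \<and> j \<in> lab i}"

definition linked :: "nat rel" where
  "linked = {(i, i'). i < n \<and> i' < n \<and> lab i \<inter> lab i' \<noteq> {}}"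

definition anchor :: "nat \<Rightarrow> nat" where
  "anchor i = (LEAST i'. (i', i) \<in> linked\<^sup>*)"

definition anchors :: "nat set" where
  "anchors = {i. i < n \<and> anchor i = i}"

definition non_anchors :: "nat set" where
  "non_anchors = {i. i < n \<and> anchor i \<noteq> i}"

lemma lab_in_nonempty_subsets: "i < n \<Longrightarrow> lab i \<in> nonempty_subsets l"
  using admissible unfolding admissible_labelling_def by auto

lemma card_lab_vimage: "J \<in> nonempty_subsets l \<Longrightarrow> card {i. i < n \<and> lab i = J} = I J"
  using admissible unfolding admissible_labelling_def by auto

lemma ex_labelled_index: "J \<in> nonempty_subsets l \<Longrightarrow> 0 < I J \<Longrightarrow> \<exists>i<n. lab i = J"
  using card_lab_vimage[of J]
  by (metis (mono_tags, lifting) Collect_empty_eq card.empty less_irrefl)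

lemma I_lab_pos: "i < n \<Longrightarrow> 0 < I (lab i)"
proof -
  assume i: "i < n"
  then have "0 < card {t. t < n \<and> lab t = lab i}" by (auto simp: card_gt_0_iff)
  then show ?thesis
    using card_lab_vimage[OF lab_in_nonempty_subsets[OF i]] by simp
qed

lemma indices_subset: "indices j \<subseteq> {..<n}"
  unfolding indices_def by auto

lemma finite_indices: "finite (indices j)"
  using indices_subset by (rule finite_subset) simp

lemma card_indices: "card (indices j) = (\<Sum>J\<in>{J\<in>nonempty_subsets l. j \<in> J}. I J)"
proof -
  have partition: "indices j = (\<Union>J\<in>{J\<in>nonempty_subsets l. j \<in> J}. {i. i < n \<and> lab i = J})"
    using lab_in_nonempty_subsets unfolding indices_def by auto
  have "card (indices j) = (\<Sum>J\<in>{J\<in>nonempty_subsets l. j \<in> J}. card {i. i < n \<and> lab i = J})"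
    unfolding partition using finite_nonempty_subsets by (intro card_UN_disjoint) auto
  also have "\<dots> = (\<Sum>J\<in>{J\<in>nonempty_subsets l. j \<in> J}. I J)"
    using card_lab_vimage by (intro sum.cong) auto
  finally show ?thesis .
qed

lemma linked_rtrancl_sym: "(i, i') \<in> linked\<^sup>* \<Longrightarrow> (i', i) \<in> linked\<^sup>*"
  by (rule symD[OF sym_rtrancl]) (auto simp: linked_def sym_def)

lemma anchor_linked: "(anchor i, i) \<in> linked\<^sup>*"
  unfolding anchor_def by (rule LeastI[of _ i]) simp

lemma anchor_le: "anchor i \<le> i"
  unfolding anchor_def by (rule Least_le) simp

lemma anchor_eq: "(i, i') \<in> linked\<^sup>* \<Longrightarrow> anchor i = anchor i'"
proof -
  assume "(i, i') \<in> linked\<^sup>*"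
  then have "(a, i) \<in> linked\<^sup>* \<longleftrightarrow> (a, i') \<in> linked\<^sup>*" for a
    using linked_rtrancl_sym by (meson rtrancl_trans)
  then show ?thesis unfolding anchor_def by simp
qed

lemma anchor_anchor: "anchor (anchor i) = anchor i"
  using anchor_eq[OF anchor_linked] by simp

lemma anchor_in_anchors: "i < n \<Longrightarrow> anchor i \<in> anchors"
  using anchor_le[of i] anchor_anchor unfolding anchors_def by (auto intro: le_less_trans)

lemma anchor_eq_on_indices: "i \<in> indices j \<Longrightarrow> i' \<in> indices j \<Longrightarrow> anchor i = anchor i'"
  by (rule anchor_eq) (auto simp: indices_def linked_def)

lemma anchor_non_anchors: "i \<in> non_anchors \<Longrightarrow> anchor i \<in> {..<n} - non_anchors"
  using anchor_in_anchors[of i] unfolding anchors_def non_anchors_def by auto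

lemma card_non_anchors_anchors: "card non_anchors + card anchors = n"
proof -
  have "non_anchors \<union> anchors = {..<n}" "non_anchors \<inter> anchors = {}"
    "finite non_anchors" "finite anchors"
    unfolding non_anchors_def anchors_def by auto
  then show ?thesis using card_Un_disjoint[of non_anchors anchors] by simp
qed

lemma isect_edge_in_lab: "i < n \<Longrightarrow> j \<in> lab i \<Longrightarrow> j' \<in> lab i \<Longrightarrow> (j, j') \<in> E"
  using lab_in_nonempty_subsets[of i] I_lab_pos[of i]
  unfolding isect_edges_def nonempty_subsets_def by auto

lemma isect_path_if_linked:
  "(i, i') \<in> linked\<^sup>* \<Longrightarrow> i < n \<Longrightarrow> j \<in> lab i \<Longrightarrow> j' \<in> lab i' \<Longrightarrow> (j, j') \<in> E\<^sup>*"
proof (induction i' arbitrary: j' rule: rtrancl_induct)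
  case base
  then show ?case using isect_edge_in_lab by blast
next
  case (step y z)
  then obtain c where c: "c \<in> lab y" "c \<in> lab z" "z < n" unfolding linked_def by auto
  then have "(j, c) \<in> E\<^sup>*" using step.IH step.prems by auto
  moreover have "(c, j') \<in> E" using isect_edge_in_lab[OF c(3) c(2) step.prems(3)] .
  ultimately show ?case by auto
qed

lemma linked_if_isect_path:
  "(j, j') \<in> E\<^sup>* \<Longrightarrow> i < n \<Longrightarrow> i' < n \<Longrightarrow> j \<in> lab i \<Longrightarrow> j' \<in> lab i' \<Longrightarrow> (i, i') \<in> linked\<^sup>*"
proof (induction j' arbitrary: i' rule: rtrancl_induct)
  case base
  then show ?case unfolding linked_def by auto
next
  case (step y z)
  then obtain J where J: "J \<in> nonempty_subsets l" "y \<in> J" "z \<in> J" "0 < I J"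
    unfolding isect_edges_def by auto
  then obtain t where t: "t < n" "lab t = J" using ex_labelled_index by auto
  then have "(i, t) \<in> linked\<^sup>*" using step.IH step.prems J by auto
  moreover have "(t, i') \<in> linked" using t J step.prems unfolding linked_def by auto
  ultimately show ?case by auto
qed

lemma anchors_eq_if_isect_path:
  assumes i: "i \<in> anchors" and i': "i' \<in> anchors"
    and "j \<in> lab i" "j' \<in> lab i'" "(j, j') \<in> E\<^sup>*"
  shows "i = i'"
proof -
  have "i < n" "i' < n" using i i' by (auto simp: anchors_def)
  then have "(i, i') \<in> linked\<^sup>*" using linked_if_isect_path assms(3-5) by blast
  then have "anchor i = anchor i'" by (rule anchor_eq)
  then show ?thesis using i i' by (simp add: anchors_def)
qed

lemma ex_anchor_isect_path:
  assumes "indices a \<noteq> {}"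
  shows "\<exists>i\<in>anchors. \<exists>j\<in>lab i. (j, a) \<in> E\<^sup>*"
proof -
  obtain t where t: "t < n" "a \<in> lab t" using assms by (auto simp: indices_def)
  have i: "anchor t \<in> anchors" "anchor t < n"
    using anchor_in_anchors[OF t(1)] by (auto simp: anchors_def)
  obtain j where j: "j \<in> lab (anchor t)"
    using lab_in_nonempty_subsets[OF i(2)] by (auto simp: nonempty_subsets_def)
  have "(j, a) \<in> E\<^sup>*" using isect_path_if_linked[OF anchor_linked i(2) j t(2)] .
  then show ?thesis using i j by blast
qed

lemma card_anchors:
  assumes covered: "\<forall>j<l. indices j \<noteq> {}"
  shows "card anchors = num_components l I"
proof -
  define some_elem where "some_elem i = Min (lab i)" for i
  have some_elem: "some_elem i \<in> lab i" "some_elem i < l" if "i \<in> anchors" for i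
    using lab_in_nonempty_subsets[of i] that
    unfolding some_elem_def nonempty_subsets_def anchors_def
    by (auto intro: Min_in finite_subset[of _ "{..<l}"])
  have E_class: "E\<^sup>* `` {a} = E\<^sup>* `` {b}" if "(a, b) \<in> E\<^sup>*" for a b
  proof -
    have "sym (E\<^sup>*)" by (rule sym_rtrancl) (auto simp: isect_edges_def sym_def)
    then have "(b, a) \<in> E\<^sup>*" using that by (rule symD)
    then show ?thesis using that by (auto intro: rtrancl_trans)
  qed
  let ?class = "\<lambda>i. E\<^sup>* `` {some_elem i}"
  have "bij_betw ?class anchors ({..<l} // E\<^sup>*)"
  proof (rule bij_betw_imageI)
    show "inj_on ?class anchors"
    proof (rule inj_onI)
      fix i i' assume i: "i \<in> anchors" and i': "i' \<in> anchors" and eq: "?class i = ?class i'"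
      have "some_elem i' \<in> ?class i" unfolding eq by simp
      then have "(some_elem i, some_elem i') \<in> E\<^sup>*" by simp
      then show "i = i'"
        by (rule anchors_eq_if_isect_path[OF i i' some_elem(1)[OF i] some_elem(1)[OF i']])
    qed
    show "?class ` anchors = {..<l} // E\<^sup>*"
    proof
      show "?class ` anchors \<subseteq> {..<l} // E\<^sup>*"
        using some_elem(2) by (auto simp: quotient_def)
      show "{..<l} // E\<^sup>* \<subseteq> ?class ` anchors"
      proof
        fix X assume "X \<in> {..<l} // E\<^sup>*"
        then obtain a where a: "a < l" "X = E\<^sup>* `` {a}" by (auto simp: quotient_def)
        then obtain i j where i: "i \<in> anchors" "j \<in> lab i" "(j, a) \<in> E\<^sup>*"
          using ex_anchor_isect_path covered by blast
        then have "(some_elem i, j) \<in> E"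
          using some_elem(1) isect_edge_in_lab by (auto simp: anchors_def)
        then have "(some_elem i, a) \<in> E\<^sup>*" using i(3) by (rule converse_rtrancl_into_rtrancl)
        then have "X = ?class i" using E_class a(2) by simp
        then show "X \<in> ?class ` anchors" using i(1) by blast
      qed
    qed
  qed
  then show ?thesis unfolding num_components_def by (rule bij_betw_same_card)
qed

end

section \<open>Rescaling the expectation\<close>

locale pattern_expectation = labelled_pattern l I lab for l I lab +
  fixes k :: "nat \<Rightarrow> nat"
    and xi :: "nat \<Rightarrow> real \<Rightarrow> 'a::euclidean_space set \<Rightarrow> real"
    and q :: "'a \<Rightarrow> real"
  assumes k_def: "\<forall>j<l. k j = (\<Sum>J\<in>{J\<in>nonempty_subsets l. j \<in> J}. I J)"
    and k_ge2: "\<forall>j<l. 2 \<le> k j"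
    and xi_adm: "\<forall>j<l. admissible_functional (k j) (xi (k j))"
    and xi_meas: "\<forall>j<l. \<forall>r>0.
        (\<lambda>y. xi (k j) r (y ` {..<k j})) \<in> borel_measurable (PiM {..<k j} (\<lambda>_. lborel))"
    and q_meas: "q \<in> borel_measurable lborel"
    and q_nonneg: "\<forall>x. 0 \<le> q x"
    and q_prob: "(\<integral>\<^sup>+ x. ennreal (q x) \<partial>lborel) = 1"
    and q_bdd: "\<exists>B. \<forall>x. q x \<le> B"
    and q_cont: "AE x in lborel. isCont q x"
begin

abbreviation lborel_n :: "(nat \<Rightarrow> 'a) measure" where
  "lborel_n \<equiv> PiM {..<n} (\<lambda>_. lborel)"

abbreviation sample_distr :: "(nat \<Rightarrow> 'a) measure" where
  "sample_distr \<equiv> PiM {..<n} (\<lambda>_. density lborel (\<lambda>z. ennreal (q z)))"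

definition integrand :: "real \<Rightarrow> (nat \<Rightarrow> 'a) \<Rightarrow> real" where
  "integrand r x = (\<Prod>j<l. xi (k j) r (x ` indices j))"

definition offsets :: "(nat \<Rightarrow> 'a) \<Rightarrow> nat \<Rightarrow> 'a" where
  "offsets x i = (if i \<in> anchors then 0 else x i)"

definition shape :: "(nat \<Rightarrow> 'a) \<Rightarrow> real" where
  "shape x = integrand 1 (offsets x)"

definition rescaled_integrand :: "real \<Rightarrow> (nat \<Rightarrow> 'a) \<Rightarrow> real" where
  "rescaled_integrand r x = shape x * (\<Prod>i<n. q (x (anchor i) + r *\<^sub>R offsets x i))"

lemma card_indices_eq: "j < l \<Longrightarrow> card (indices j) = k j"
  using card_indices k_def by auto

lemma xi_nonneg: "j < l \<Longrightarrow> r > 0 \<Longrightarrow> finite X \<Longrightarrow> 0 \<le> xi (k j) r X"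
  using xi_adm unfolding admissible_functional_def by auto

lemma xi_rescale:
  "j < l \<Longrightarrow> r > 0 \<Longrightarrow> finite X \<Longrightarrow> xi (k j) r ((\<lambda>y. r *\<^sub>R y + c) ` X) = xi (k j) 1 X"
  using xi_adm unfolding admissible_functional_def by auto

lemma integrand_nonneg: "r > 0 \<Longrightarrow> 0 \<le> integrand r x"
  unfolding integrand_def using xi_nonneg finite_indices by (intro prod_nonneg) auto

lemma integrand_measurable:
  assumes r: "r > 0"
  shows "integrand r \<in> borel_measurable lborel_n"
proof -
  have "(\<lambda>x. xi (k j) r (x ` indices j)) \<in> borel_measurable lborel_n" if j: "j < l" for j
  proof -
    obtain e where "bij_betw e {0..<card (indices j)} (indices j)"
      using ex_bij_betw_nat_finite[OF finite_indices] by auto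
    then have e: "bij_betw e {..<k j} (indices j)"
      using card_indices_eq[OF j] by (simp add: atLeast0LessThan)
    define enum where "enum x t = (if t < k j then x (e t) else undefined)"
      for x :: "nat \<Rightarrow> 'a" and t
    have "(\<lambda>x t. enum x t) \<in> lborel_n \<rightarrow>\<^sub>M PiM {..<k j} (\<lambda>_. lborel)"
    proof (rule measurable_PiM_single')
      fix t assume t: "t \<in> {..<k j}"
      then have "e t \<in> {..<n}" using e indices_subset by (auto simp: bij_betw_def)
      then show "(\<lambda>x. enum x t) \<in> lborel_n \<rightarrow>\<^sub>M lborel" using t unfolding enum_def by simp
    qed (auto simp: enum_def space_PiM PiE_def extensional_def)
    then have enum_meas: "enum \<in> lborel_n \<rightarrow>\<^sub>M PiM {..<k j} (\<lambda>_. lborel)" by simp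
    have "enum x ` {..<k j} = x ` e ` {..<k j}" for x
      unfolding enum_def by auto
    then have "x ` indices j = enum x ` {..<k j}" for x
      using e unfolding bij_betw_def by simp
    then show ?thesis
      using measurable_compose[OF enum_meas, of "\<lambda>y. xi (k j) r (y ` {..<k j})"] xi_meas j r by simp
  qed
  then show ?thesis unfolding integrand_def by (intro borel_measurable_prod) auto
qed

lemma offsets_measurable: "offsets \<in> lborel_n \<rightarrow>\<^sub>M lborel_n"
proof (rule measurable_PiM_lborel_selfI)
  fix i :: nat assume "i \<in> {..<n}"
  then show "(\<lambda>x. offsets x i) \<in> borel_measurable lborel_n"
    unfolding offsets_def by (cases "i \<in> anchors") auto
qed (auto simp: offsets_def anchors_def extensional_def)

lemma shape_measurable: "shape \<in> borel_measurable lborel_n"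
  unfolding shape_def using measurable_compose[OF offsets_measurable integrand_measurable[of 1]]
  by (simp add: comp_def)

lemma shape_nonneg: "0 \<le> shape x"
  unfolding shape_def using integrand_nonneg by simp

lemma rescaled_integrand_measurable: "rescaled_integrand r \<in> borel_measurable lborel_n"
proof -
  have "(\<lambda>x. q (x (anchor i) + r *\<^sub>R offsets x i)) \<in> borel_measurable lborel_n" if i: "i < n" for i
  proof -
    have [measurable]: "anchor i \<in> {..<n}" using anchor_in_anchors[OF i] by (simp add: anchors_def)
    have [measurable]: "(\<lambda>x. offsets x i) \<in> borel_measurable lborel_n"
      using measurable_compose[OF offsets_measurable measurable_component_singleton[of i]] i
      by (simp add: comp_def)
    have "(\<lambda>x. x (anchor i) + r *\<^sub>R offsets x i) \<in> borel_measurable lborel_n" by measurable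
    then show ?thesis using q_meas by (simp add: measurable_compose)
  qed
  then show ?thesis
    unfolding rescaled_integrand_def using shape_measurable
    by (intro borel_measurable_times borel_measurable_prod) auto
qed

lemma rescaled_integrand_nonneg: "0 \<le> rescaled_integrand r x"
  unfolding rescaled_integrand_def using shape_nonneg q_nonneg
  by (intro mult_nonneg_nonneg prod_nonneg) auto

lemma anchored_rescale_non_anchors:
  "i < n \<Longrightarrow> anchored_rescale non_anchors anchor r x i = x (anchor i) + r *\<^sub>R offsets x i"
  unfolding anchored_rescale_def offsets_def anchors_def non_anchors_def by auto

lemma integrand_anchored_rescale:
  assumes r: "r > 0"
  shows "integrand r (anchored_rescale non_anchors anchor r x) = shape x"
proof -
  have "xi (k j) r (anchored_rescale non_anchors anchor r x ` indices j)
      = xi (k j) 1 (offsets x ` indices j)"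
    if j: "j < l" for j
  proof -
    define c where "c = x (anchor (SOME i. i \<in> indices j))"
    \<comment> \<open>all points of \<open>T\<^sub>j\<close> share one anchor, so \<open>T\<^sub>j\<close> is an \<open>r\<close>-scaled translate of its offsets\<close>
    have "anchored_rescale non_anchors anchor r x i = r *\<^sub>R offsets x i + c"
      if i: "i \<in> indices j" for i
    proof -
      have "anchor i = anchor (SOME i. i \<in> indices j)" using anchor_eq_on_indices i by (metis someI)
      moreover have "i < n" using i indices_subset by auto
      ultimately show ?thesis
        unfolding c_def by (simp add: anchored_rescale_non_anchors add.commute)
    qed
    then have "anchored_rescale non_anchors anchor r x ` indices j
        = (\<lambda>y. r *\<^sub>R y + c) ` offsets x ` indices j"
      unfolding image_image by (rule image_cong[OF refl])
    then show ?thesis using xi_rescale[OF j r] finite_indices by simp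
  qed
  then show ?thesis unfolding integrand_def shape_def by (intro prod.cong) auto
qed

lemma shape_bounded: "\<exists>B\<ge>0. \<forall>x. shape x \<le> B"
proof -
  have "\<forall>j\<in>{..<l}. \<exists>B. \<forall>X. finite X \<longrightarrow> \<bar>xi (k j) 1 X\<bar> \<le> B"
    using xi_adm unfolding admissible_functional_def by blast
  then obtain B where B: "\<And>j X. j < l \<Longrightarrow> finite X \<Longrightarrow> \<bar>xi (k j) 1 X\<bar> \<le> B j"
    by (metis lessThan_iff)
  have "shape x \<le> (\<Prod>j<l. B j)" for x
    unfolding shape_def integrand_def
    using B finite_indices xi_nonneg by (intro prod_mono) (auto simp: abs_le_iff)
  moreover have "0 \<le> (\<Prod>j<l. B j)"
    using B[of _ "{}"] by (intro prod_nonneg) (auto intro: order_trans[OF abs_ge_zero])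
  ultimately show ?thesis by blast
qed

lemma linked_offsets_dist_bounded:
  "\<exists>\<delta>\<ge>0. \<forall>x a b. shape x \<noteq> 0 \<longrightarrow> (a, b) \<in> linked \<longrightarrow> dist (offsets x a) (offsets x b) \<le> \<delta>"
proof -
  have "\<forall>j\<in>{..<l}. \<exists>rm>0. \<forall>X. finite X \<longrightarrow> diameter X > rm \<longrightarrow> xi (k j) 1 X = 0"
    using xi_adm unfolding admissible_functional_def by auto
  then obtain rm where rm: "\<And>j X. j < l \<Longrightarrow> finite X \<Longrightarrow> diameter X > rm j \<Longrightarrow> xi (k j) 1 X = 0"
    and rm_pos: "\<And>j. j < l \<Longrightarrow> rm j > 0"
    by (metis lessThan_iff)
  have "dist (offsets x a) (offsets x b) \<le> (\<Sum>j<l. rm j)"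
    if x: "shape x \<noteq> 0" and ab: "(a, b) \<in> linked" for x a b
  proof -
    obtain j where j: "j \<in> lab a" "j \<in> lab b" "a < n"
      using ab unfolding linked_def by auto
    then have "j < l" using lab_in_nonempty_subsets[of a] by (auto simp: nonempty_subsets_def)
    have "a \<in> indices j" "b \<in> indices j" using j ab unfolding indices_def linked_def by auto
    then have "dist (offsets x a) (offsets x b) \<le> diameter (offsets x ` indices j)"
      using finite_indices by (intro diameter_bounded_bound finite_imp_bounded) auto
    moreover have "xi (k j) 1 (offsets x ` indices j) \<noteq> 0"
      using x \<open>j < l\<close> unfolding shape_def integrand_def by auto
    then have "\<not> diameter (offsets x ` indices j) > rm j"
      using rm[OF \<open>j < l\<close>] finite_indices by blast
    then have "diameter (offsets x ` indices j) \<le> rm j" by simp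
    moreover have "rm j \<le> (\<Sum>j<l. rm j)"
      using rm_pos \<open>j < l\<close> by (intro member_le_sum) (auto intro: less_imp_le)
    ultimately show ?thesis by linarith
  qed
  moreover have "0 \<le> (\<Sum>j<l. rm j)" using rm_pos by (intro sum_nonneg) (auto intro: less_imp_le)
  ultimately show ?thesis by blast
qed

lemma shape_support_bounded: "\<exists>D. \<forall>x. shape x \<noteq> 0 \<longrightarrow> (\<forall>i\<in>non_anchors. norm (x i) \<le> D)"
proof -
  obtain \<delta> where \<delta>: "\<delta> \<ge> 0"
    and step: "\<And>x a b. shape x \<noteq> 0 \<Longrightarrow> (a, b) \<in> linked \<Longrightarrow> dist (offsets x a) (offsets x b) \<le> \<delta>"
    using linked_offsets_dist_bounded by blast
  have path: "dist (offsets x a) (offsets x b) \<le> real m * \<delta>"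
    if "shape x \<noteq> 0" "(a, b) \<in> linked ^^ m" for x a b m
    using that(2)
  proof (induction m arbitrary: b)
    case (Suc m)
    then obtain c where c: "(a, c) \<in> linked ^^ m" "(c, b) \<in> linked" by auto
    have "dist (offsets x a) (offsets x b)
        \<le> dist (offsets x a) (offsets x c) + dist (offsets x c) (offsets x b)"
      by (rule dist_triangle)
    also have "\<dots> \<le> real m * \<delta> + \<delta>" using Suc.IH[OF c(1)] step[OF that(1) c(2)] by linarith
    finally show ?case by (simp add: algebra_simps)
  qed simp
  have "\<forall>i. \<exists>m. (anchor i, i) \<in> linked ^^ m"
    using anchor_linked rtrancl_power by blast
  then obtain len where len: "\<And>i. (anchor i, i) \<in> linked ^^ len i"
    by metis
  have "norm (x i) \<le> real (\<Sum>i<n. len i) * \<delta>" if x: "shape x \<noteq> 0" and i: "i \<in> non_anchors" for x i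
  proof -
    have "offsets x (anchor i) = 0" "offsets x i = x i"
      using i anchor_non_anchors[OF i] unfolding offsets_def anchors_def non_anchors_def by auto
    then have "norm (x i) = dist (offsets x (anchor i)) (offsets x i)" by (simp add: dist_norm)
    also have "\<dots> \<le> real (len i) * \<delta>" using path[OF x len] .
    also have "\<dots> \<le> real (\<Sum>i<n. len i) * \<delta>"
      using i \<delta> by (intro mult_right_mono) (auto simp: non_anchors_def intro!: member_le_sum)
    finally show ?thesis .
  qed
  then show ?thesis by blast
qed

lemma q_integrable: "integrable lborel q"
  using q_meas q_nonneg q_prob unfolding integrable_iff_bounded by simp

lemma sigma_finite_density_q: "sigma_finite_measure (density lborel (\<lambda>z. ennreal (q z)))"
proof -
  have "prob_space (density lborel (\<lambda>z. ennreal (q z)))"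
    using q_meas q_prob by (intro prob_spaceI) (simp add: emeasure_density)
  then show ?thesis by (rule prob_space_imp_sigma_finite)
qed

lemma integral_integrand_eq:
  assumes r: "r > 0"
  shows "(\<integral>x. integrand r x \<partial>sample_distr)
    = r ^ (DIM('a) * card non_anchors) * (\<integral>x. rescaled_integrand r x \<partial>lborel_n)"
proof -
  let ?dens = "\<lambda>x. \<Prod>i<n. ennreal (q (x i))"
  let ?\<Phi> = "anchored_rescale non_anchors anchor r"
  have q_borel[measurable]: "q \<in> borel_measurable borel" using q_meas by simp
  have [measurable]: "integrand r \<in> borel_measurable lborel_n" using integrand_measurable[OF r] .
  have sets_sample_distr: "sets sample_distr = sets lborel_n" by (intro sets_PiM_cong) auto
  have "(\<integral>\<^sup>+x. integrand r x \<partial>sample_distr) = (\<integral>\<^sup>+x. integrand r x \<partial>density lborel_n ?dens)"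
    using PiM_density_eq_density_PiM[OF _ sigma_finite_lborel sigma_finite_density_q, of "{..<n}"]
    by simp
  also have "\<dots> = (\<integral>\<^sup>+x. ?dens x * integrand r x \<partial>lborel_n)"
    by (rule nn_integral_density) measurable
  also have "\<dots> = ennreal (r ^ (DIM('a) * card non_anchors))
      * (\<integral>\<^sup>+x. ?dens (?\<Phi> x) * integrand r (?\<Phi> x) \<partial>lborel_n)"
    using anchor_non_anchors r
    by (intro nn_integral_PiM_lborel_anchored_rescale) (auto simp: non_anchors_def)
  also have "(\<integral>\<^sup>+x. ?dens (?\<Phi> x) * integrand r (?\<Phi> x) \<partial>lborel_n)
      = (\<integral>\<^sup>+x. rescaled_integrand r x \<partial>lborel_n)"
  proof (rule nn_integral_cong)
    fix x
    have "?dens (?\<Phi> x) = ennreal (\<Prod>i<n. q (x (anchor i) + r *\<^sub>R offsets x i))"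
      using q_nonneg by (simp add: anchored_rescale_non_anchors prod_ennreal)
    then show "?dens (?\<Phi> x) * integrand r (?\<Phi> x) = ennreal (rescaled_integrand r x)"
      unfolding integrand_anchored_rescale[OF r] rescaled_integrand_def using shape_nonneg q_nonneg
      by (simp add: ennreal_mult'' prod_nonneg mult.commute)
  qed
  finally have nn: "(\<integral>\<^sup>+x. integrand r x \<partial>sample_distr)
      = ennreal (r ^ (DIM('a) * card non_anchors)) * (\<integral>\<^sup>+x. rescaled_integrand r x \<partial>lborel_n)" .
  have "(\<integral>x. integrand r x \<partial>sample_distr) = enn2real (\<integral>\<^sup>+x. integrand r x \<partial>sample_distr)"
    using integrand_nonneg[OF r] measurable_cong_sets[OF sets_sample_distr refl]
    by (intro integral_eq_nn_integral) auto
  also have "\<dots> = r ^ (DIM('a) * card non_anchors)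
      * enn2real (\<integral>\<^sup>+x. rescaled_integrand r x \<partial>lborel_n)"
    unfolding nn using r by (simp add: enn2real_mult)
  also have "enn2real (\<integral>\<^sup>+x. rescaled_integrand r x \<partial>lborel_n)
      = (\<integral>x. rescaled_integrand r x \<partial>lborel_n)"
    using rescaled_integrand_measurable rescaled_integrand_nonneg
    by (intro integral_eq_nn_integral[symmetric]) auto
  finally show ?thesis .
qed

lemma rescaled_expectation_eq:
  assumes r: "r > 0"
  shows "r powr (- (real DIM('a) * (real n - real (num_components l I))))
      * (\<integral>x. integrand r x \<partial>sample_distr) = (\<integral>x. rescaled_integrand r x \<partial>lborel_n)"
proof -
  have "indices j \<noteq> {}" if "j < l" for j
    using card_indices_eq[OF that] k_ge2 that by fastforce
  then have "real n - real (num_components l I) = real (card non_anchors)"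
    using card_anchors card_non_anchors_anchors by (metis add_diff_cancel_right' of_nat_add)
  moreover have
    "r powr (- real (DIM('a) * card non_anchors)) * r ^ (DIM('a) * card non_anchors) = 1"
    using r powr_realpow[OF r, of "DIM('a) * card non_anchors"] by (simp add: powr_minus)
  ultimately show ?thesis
    unfolding integral_integrand_eq[OF r] by (simp add: mult.assoc[symmetric])
qed

lemma rescaled_integrand_dominated:
  "\<exists>w. integrable lborel_n w \<and> (\<forall>r x. norm (rescaled_integrand r x) \<le> w x)"
proof -
  interpret product_sigma_finite "\<lambda>_::nat. lborel :: 'a measure"
    by (rule product_sigma_finite_lborel)
  obtain B where B: "B \<ge> 0" "\<And>x. shape x \<le> B" using shape_bounded by auto
  obtain D where D: "\<And>x i. shape x \<noteq> 0 \<Longrightarrow> i \<in> non_anchors \<Longrightarrow> norm (x i) \<le> D"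
    using shape_support_bounded by blast
  obtain Bq where Bq: "\<And>z. q z \<le> Bq" using q_bdd by auto
  have Bq_nonneg: "0 \<le> Bq" using Bq[of 0] q_nonneg by (meson order_trans)
  \<comment> \<open>anchor coordinates keep the density \<open>q\<close>, the others are confined to a ball by \<open>shape\<close>\<close>
  define f where "f i = (if anchor i = i then q else (\<lambda>z. Bq * indicator (cball 0 D) z))" for i
  define w where "w x = B * (\<Prod>i<n. f i (x i))" for x :: "nat \<Rightarrow> 'a"
  have f_nonneg: "0 \<le> f i z" for i z unfolding f_def using q_nonneg Bq_nonneg by auto
  have "integrable lborel (f i)" for i
    using q_integrable emeasure_lborel_cball_finite
    by (cases "anchor i = i") (auto simp: f_def integrable_indicator_iff)
  then have "integrable lborel_n w"
    unfolding w_def by (intro integrable_mult_right product_integrable_prod) auto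
  moreover have "norm (rescaled_integrand r x) \<le> w x" for r x
  proof (cases "shape x = 0")
    case True
    then show ?thesis
      using B f_nonneg
      by (auto simp: rescaled_integrand_def w_def intro!: mult_nonneg_nonneg prod_nonneg)
  next
    case False
    have "q (x (anchor i) + r *\<^sub>R offsets x i) \<le> f i (x i)" if i: "i < n" for i
    proof (cases "anchor i = i")
      case True
      then show ?thesis using i by (simp add: f_def offsets_def anchors_def)
    next
      case False
      then have "norm (x i) \<le> D" using D[OF \<open>shape x \<noteq> 0\<close>] i by (auto simp: non_anchors_def)
      then show ?thesis using False Bq by (simp add: f_def)
    qed
    then have "(\<Prod>i<n. q (x (anchor i) + r *\<^sub>R offsets x i)) \<le> (\<Prod>i<n. f i (x i))"
      using q_nonneg by (intro prod_mono) auto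
    then have "rescaled_integrand r x \<le> w x"
      unfolding rescaled_integrand_def w_def using B shape_nonneg q_nonneg
      by (intro mult_mono) (auto intro: prod_nonneg)
    then show ?thesis using rescaled_integrand_nonneg by simp
  qed
  ultimately show ?thesis by blast
qed

lemma rescaled_integrand_tendsto:
  "AE x in lborel_n. ((\<lambda>r. rescaled_integrand r x) \<longlongrightarrow> rescaled_integrand 0 x) (at_right 0)"
proof -
  have "AE x in lborel_n. \<forall>i\<in>{..<n}. isCont q (x i)"
    using AE_PiM_finite_component[OF sigma_finite_lborel finite_lessThan _ q_cont]
    by (subst AE_finite_all) auto
  then show ?thesis
  proof eventually_elim
    case (elim x)
    have "((\<lambda>r. q (x (anchor i) + r *\<^sub>R offsets x i))
        \<longlongrightarrow> q (x (anchor i) + 0 *\<^sub>R offsets x i)) (at_right 0)"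
      if "i < n" for i
      using elim anchor_in_anchors[OF that]
      by (intro isCont_tendsto_compose[where g = q] tendsto_intros) (auto simp: anchors_def)
    then show ?case unfolding rescaled_integrand_def by (intro tendsto_intros) auto
  qed
qed

lemma tendsto_integral_rescaled_integrand:
  "((\<lambda>r. \<integral>x. rescaled_integrand r x \<partial>lborel_n)
    \<longlongrightarrow> (\<integral>x. rescaled_integrand 0 x \<partial>lborel_n)) (at_right 0)"
proof -
  obtain w where w: "integrable lborel_n w" "\<And>r x. norm (rescaled_integrand r x) \<le> w x"
    using rescaled_integrand_dominated by blast
  have "AE x in lborel_n. ((\<lambda>t. rescaled_integrand (inverse t) x) \<longlongrightarrow> rescaled_integrand 0 x) at_top"
    using rescaled_integrand_tendsto
  proof eventually_elim
    case (elim x)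
    show ?case using filterlim_compose[OF elim filterlim_inverse_at_right_top] by simp
  qed
  then have "((\<lambda>t. \<integral>x. rescaled_integrand (inverse t) x \<partial>lborel_n)
      \<longlongrightarrow> (\<integral>x. rescaled_integrand 0 x \<partial>lborel_n)) at_top"
    using rescaled_integrand_measurable w
    by (intro integral_dominated_convergence_at_top[where w = w]) auto
  then show ?thesis by (simp add: filterlim_at_right_to_top)
qed

end

theorem lemma3p5:
  fixes l :: nat
    and I :: "nat set \<Rightarrow> nat"
    and k :: "nat \<Rightarrow> nat"
    and lab :: "nat \<Rightarrow> nat set"
    and xi :: "nat \<Rightarrow> real \<Rightarrow> 'a::euclidean_space set \<Rightarrow> real"
    and q :: "'a \<Rightarrow> real"
  assumes k_def: "\<forall>j<l. k j = (\<Sum>J\<in>{J\<in>nonempty_subsets l. j \<in> J}. I J)"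
    and k_ge2: "\<forall>j<l. 2 \<le> k j"
    and lab: "admissible_labelling l I lab"
    and xi_adm: "\<forall>j<l. admissible_functional (k j) (xi (k j))"
    and xi_meas: "\<forall>j<l. \<forall>r>0.
        (\<lambda>y. xi (k j) r (y ` {..<k j})) \<in> borel_measurable (PiM {..<k j} (\<lambda>_. lborel))"
    and q_meas: "q \<in> borel_measurable lborel"
    and q_nonneg: "\<forall>x. 0 \<le> q x"
    and q_prob: "(\<integral>\<^sup>+ x. ennreal (q x) \<partial>lborel) = 1"
    and q_bdd: "\<exists>B. \<forall>x. q x \<le> B"
    and q_cont: "AE x in lborel. isCont q x"
  shows "\<exists>c\<ge>0. ((\<lambda>r. r powr (- (real DIM('a) * (real (pattern_size l I) - real (num_components l I))))
              * (\<integral>x. (\<Prod>j<l. xi (k j) r (split_set l I lab j x))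
                   \<partial>(PiM {..<pattern_size l I} (\<lambda>_. density lborel (\<lambda>z. ennreal (q z))))))
            \<longlongrightarrow> c) (at_right 0)"
proof -
  interpret pattern_expectation l I lab k xi q
    using assms by unfold_locales
  have integrand: "(\<lambda>x. \<Prod>j<l. xi (k j) r (split_set l I lab j x)) = integrand r" for r
    by (simp add: fun_eq_iff integrand_def split_set_def indices_def)
  have "\<forall>\<^sub>F r in at_right 0. (\<integral>x. rescaled_integrand r x \<partial>lborel_n)
      = r powr (- (real DIM('a) * (real n - real (num_components l I))))
        * (\<integral>x. (\<Prod>j<l. xi (k j) r (split_set l I lab j x)) \<partial>sample_distr)"
    using eventually_at_right_less[of "0::real"]
    by eventually_elim (simp add: integrand rescaled_expectation_eq)
  then have "((\<lambda>r. r powr (- (real DIM('a) * (real n - real (num_components l I))))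
        * (\<integral>x. (\<Prod>j<l. xi (k j) r (split_set l I lab j x)) \<partial>sample_distr))
      \<longlongrightarrow> (\<integral>x. rescaled_integrand 0 x \<partial>lborel_n)) (at_right 0)"
    using tendsto_integral_rescaled_integrand by (rule tendsto_cong[THEN iffD1])
  moreover have "0 \<le> (\<integral>x. rescaled_integrand 0 x \<partial>lborel_n)"
    by (simp add: integral_nonneg rescaled_integrand_nonneg)
  ultimately show ?thesis by blast
qed

end
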